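(* Let $G$ be a triangle-free graph on $n\ge1$ vertices and $\lambda>0$. Let $I$ be drawn from the hard-core model on $G$ at fugacity $\lambda$ and, independently, let $v$ be a uniformly random vertex of $G$. Let $Z$ be the number of neighbors $u$ of $v$ that are uncovered, i.e. satisfy $N(u)\cap I=\emptyset$. Then \[ \frac1n\overline\alpha_G(\lambda)=\frac{\lambda}{1+\lambda}\,\mathbb E\big[(1+\lambda)^{-Z}\big]. \] Moreover, if $G$ has maximum degree $d\ge1$, then $\frac1n\overline\alpha_G(\lambda)\ge\frac{\lambda}{1+\lambda}\frac{\mathbb E Z}{d}$, with equality if $G$ is $d$-regular.
   Context: The hard-core model at fugacity $\lambda>0$ on $G$ is the distribution $\Pr[I]=\lambda^{|I|}/P_G(\lambda)$ on independent sets $I$ of $G$, with $P_G(\lambda)=\sum_{J}\lambda^{|J|}$ over all independent sets $J$. $\overline{\alpha}_G(\lambda)=\mathbb E|I|$. $N(u)$ denotes the set of neighbors of $u$. *)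

theory Defs
  imports Complex_Main
begin

definition simple_graph :: "'a set \<Rightarrow> ('a \<Rightarrow> 'a \<Rightarrow> bool) \<Rightarrow> bool" where
  "simple_graph V E \<longleftrightarrow> finite V \<and> (\<forall>x y. E x y \<longrightarrow> E y x)
     \<and> (\<forall>x. \<not> E x x) \<and> (\<forall>x y. E x y \<longrightarrow> x \<in> V \<and> y \<in> V)"

definition triangle_free :: "'a set \<Rightarrow> ('a \<Rightarrow> 'a \<Rightarrow> bool) \<Rightarrow> bool" where
  "triangle_free V E \<longleftrightarrow> \<not> (\<exists>x\<in>V. \<exists>y\<in>V. \<exists>z\<in>V. E x y \<and> E y z \<and> E x z)"

definition nbrs :: "'a set \<Rightarrow> ('a \<Rightarrow> 'a \<Rightarrow> bool) \<Rightarrow> 'a \<Rightarrow> 'a set" where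
  "nbrs V E u = {w \<in> V. E u w}"

definition degree :: "'a set \<Rightarrow> ('a \<Rightarrow> 'a \<Rightarrow> bool) \<Rightarrow> 'a \<Rightarrow> nat" where
  "degree V E u = card (nbrs V E u)"

definition max_degree :: "'a set \<Rightarrow> ('a \<Rightarrow> 'a \<Rightarrow> bool) \<Rightarrow> nat" where
  "max_degree V E = Max (degree V E ` V)"

definition regular :: "'a set \<Rightarrow> ('a \<Rightarrow> 'a \<Rightarrow> bool) \<Rightarrow> nat \<Rightarrow> bool" where
  "regular V E d \<longleftrightarrow> (\<forall>v\<in>V. degree V E v = d)"

definition independent :: "'a set \<Rightarrow> ('a \<Rightarrow> 'a \<Rightarrow> bool) \<Rightarrow> 'a set \<Rightarrow> bool" where
  "independent V E I \<longleftrightarrow> I \<subseteq> V \<and> (\<forall>x\<in>I. \<forall>y\<in>I. \<not> E x y)"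

definition indep_sets :: "'a set \<Rightarrow> ('a \<Rightarrow> 'a \<Rightarrow> bool) \<Rightarrow> 'a set set" where
  "indep_sets V E = {I. independent V E I}"

definition partition_fn :: "'a set \<Rightarrow> ('a \<Rightarrow> 'a \<Rightarrow> bool) \<Rightarrow> real \<Rightarrow> real" where
  "partition_fn V E lam = (\<Sum>J\<in>indep_sets V E. lam ^ card J)"

definition hc_prob :: "'a set \<Rightarrow> ('a \<Rightarrow> 'a \<Rightarrow> bool) \<Rightarrow> real \<Rightarrow> 'a set \<Rightarrow> real" where
  "hc_prob V E lam I = lam ^ card I / partition_fn V E lam"

definition alpha_bar :: "'a set \<Rightarrow> ('a \<Rightarrow> 'a \<Rightarrow> bool) \<Rightarrow> real \<Rightarrow> real" where
  "alpha_bar V E lam = (\<Sum>I\<in>indep_sets V E. hc_prob V E lam I * real (card I))"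

definition uncovered_nbrs :: "'a set \<Rightarrow> ('a \<Rightarrow> 'a \<Rightarrow> bool) \<Rightarrow> 'a set \<Rightarrow> 'a \<Rightarrow> nat" where
  "uncovered_nbrs V E I v = card {u \<in> nbrs V E v. nbrs V E u \<inter> I = {}}"

definition joint_expect ::
  "'a set \<Rightarrow> ('a \<Rightarrow> 'a \<Rightarrow> bool) \<Rightarrow> real \<Rightarrow> ('a set \<Rightarrow> 'a \<Rightarrow> real) \<Rightarrow> real" where
  "joint_expect V E lam f =
     (\<Sum>I\<in>indep_sets V E. \<Sum>v\<in>V. hc_prob V E lam I * (1 / real (card V)) * f I v)"

end

theory Submission
  imports Defs
begin

text \<open>
  A vertex \<open>v\<close> is occupied exactly when it is uncovered and then itself chosen: pairing \<open>I \<ni> v\<close>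
  with \<open>I - {v}\<close> shows that, given \<open>N(v) \<inter> I = {}\<close>, \<open>v \<in> I\<close> has probability \<open>\<lambda>/(1+\<lambda>)\<close>, so
  \<open>\<alpha>/n = \<lambda>/(1+\<lambda>) \<cdot> Pr[v uncovered]\<close>.
  If \<open>G\<close> is triangle-free, \<open>N(v)\<close> is independent and which neighbours of \<open>v\<close> are uncovered
  depends only on \<open>J = I - N(v)\<close>; conditioned on \<open>J\<close>, \<open>I \<inter> N(v)\<close> is an arbitrary subset \<open>S\<close>
  of these \<open>Z\<close> vertices with weight \<open>\<lambda>^|S|\<close>, so it is empty with probability \<open>(1+\<lambda>)^-Z\<close>.
  Hence \<open>Pr[v uncovered] = E (1+\<lambda>)^-Z\<close>. Finally, double counting gives
  \<open>n \<cdot> E Z = \<Sum>\<^sub>u deg(u) Pr[u uncovered]\<close>, which is at most \<open>d\<close> times \<open>\<Sum>\<^sub>u Pr[u uncovered]\<close>,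
  with equality for \<open>d\<close>-regular graphs.
\<close>

lemma sum_Pow_power_card:
  fixes x :: "'b :: comm_semiring_1"
  assumes "finite A"
  shows "(\<Sum>S\<in>Pow A. x ^ card S) = (1 + x) ^ card A"
proof -
  have "(\<Prod>a\<in>A. x + 1) = (\<Sum>S\<in>Pow A. (\<Prod>a\<in>S. x) * (\<Prod>a\<in>A - S. 1))"
    by (rule prod_add[OF assms])
  then show ?thesis by (simp add: add.commute)
qed

context
  fixes V :: "'a set" and E :: "'a \<Rightarrow> 'a \<Rightarrow> bool"
begin

definition uncovered :: "'a set \<Rightarrow> 'a \<Rightarrow> 'a set" where
  "uncovered I v = {u \<in> nbrs V E v. nbrs V E u \<inter> I = {}}"

lemma uncovered_subset_nbrs: "uncovered I v \<subseteq> nbrs V E v"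
  unfolding uncovered_def by auto

context
  assumes G: "simple_graph V E"
begin

lemma finite_vertices: "finite V"
  using G unfolding simple_graph_def by auto

lemma edge_sym: "E x y \<Longrightarrow> E y x"
  using G unfolding simple_graph_def by auto

lemma edge_irrefl: "\<not> E x x"
  using G unfolding simple_graph_def by auto

lemma edge_vertices: "E x y \<Longrightarrow> x \<in> V \<and> y \<in> V"
  using G unfolding simple_graph_def by auto

lemma finite_indep_sets: "finite (indep_sets V E)"
proof -
  have "indep_sets V E \<subseteq> Pow V" unfolding indep_sets_def independent_def by auto
  then show ?thesis using finite_vertices finite_subset by blast
qed

lemma finite_indep: "I \<in> indep_sets V E \<Longrightarrow> finite I"
  using finite_vertices finite_subset unfolding indep_sets_def independent_def by auto

lemma independent_Un_iff:
  "independent V E (A \<union> B) \<longleftrightarrow>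
     independent V E A \<and> independent V E B \<and> (\<forall>x\<in>A. \<forall>y\<in>B. \<not> E x y)"
  using edge_sym unfolding independent_def by blast

lemma independent_insert_iff:
  "independent V E (insert v A) \<longleftrightarrow>
     v \<in> V \<and> independent V E A \<and> nbrs V E v \<inter> A = {}"
  using independent_Un_iff[of "{v}" A] edge_irrefl
  unfolding independent_def nbrs_def by auto

lemma degree_le_max_degree: "u \<in> V \<Longrightarrow> degree V E u \<le> max_degree V E"
  unfolding max_degree_def using finite_vertices by simp

lemma nbrs_independent:
  assumes "triangle_free V E"
  shows "independent V E (nbrs V E v)"
  using assms edge_vertices unfolding triangle_free_def independent_def nbrs_def by blast

lemma sum_card_nbrs_filter:
  "(\<Sum>v\<in>V. card {u \<in> nbrs V E v. P u}) = (\<Sum>u\<in>V. if P u then degree V E u else 0)"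
proof -
  have card_filter: "card {u \<in> A. Q u} = (\<Sum>u\<in>A. if Q u then 1 else 0)"
    if "finite A" for A and Q :: "'a \<Rightarrow> bool"
    using that by (simp add: sum.inter_filter[symmetric])
  have "{u \<in> nbrs V E v. P u} = {u \<in> V. E v u \<and> P u}" for v
    unfolding nbrs_def by auto
  then have "(\<Sum>v\<in>V. card {u \<in> nbrs V E v. P u}) =
      (\<Sum>v\<in>V. \<Sum>u\<in>V. if E v u \<and> P u then 1 else 0)"
    using card_filter finite_vertices by simp
  also have "\<dots> = (\<Sum>u\<in>V. \<Sum>v\<in>V. if E u v \<and> P u then 1 else 0)"
  proof -
    have "E v u \<longleftrightarrow> E u v" for u v using edge_sym by blast
    then show ?thesis by (subst sum.swap) (simp only:)
  qed
  also have "\<dots> = (\<Sum>u\<in>V. if P u then degree V E u else 0)"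
    using card_filter[OF finite_vertices]
    by (intro sum.cong) (simp_all add: degree_def nbrs_def)
  finally show ?thesis .
qed

lemma sum_degree_mult_le:
  fixes w :: "'a \<Rightarrow> real"
  assumes "\<And>u. u \<in> V \<Longrightarrow> w u \<ge> 0"
  shows "(\<Sum>u\<in>V. real (degree V E u) * w u) \<le> real (max_degree V E) * (\<Sum>u\<in>V. w u)"
  unfolding sum_distrib_left using assms degree_le_max_degree
  by (auto intro!: sum_mono mult_right_mono)

lemma uncovered_Diff_nbrs:
  assumes "triangle_free V E"
  shows "uncovered (I - nbrs V E v) v = uncovered I v"
  using nbrs_independent[OF assms, of v] unfolding uncovered_def independent_def nbrs_def
  by blast

end

end

context
  fixes V :: "'a set" and E :: "'a \<Rightarrow> 'a \<Rightarrow> bool" and lam :: real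
begin

definition hc_weight :: "('a set \<Rightarrow> bool) \<Rightarrow> real" where
  "hc_weight P = (\<Sum>I\<in>{I\<in>indep_sets V E. P I}. lam ^ card I)"

lemma hc_weight_cong:
  "(\<And>I. I \<in> indep_sets V E \<Longrightarrow> P I \<longleftrightarrow> Q I) \<Longrightarrow> hc_weight P = hc_weight Q"
  unfolding hc_weight_def by (rule sum.cong) auto

lemma hc_weight_nonneg: "lam \<ge> 0 \<Longrightarrow> hc_weight P \<ge> 0"
  unfolding hc_weight_def by (intro sum_nonneg) auto

lemma joint_expect_eq:
  "joint_expect V E lam f =
     (\<Sum>v\<in>V. \<Sum>I\<in>indep_sets V E. lam ^ card I * f I v)
       / (partition_fn V E lam * real (card V))"
  unfolding joint_expect_def hc_prob_def
  by (subst sum.swap) (simp add: sum_divide_distrib)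

context
  assumes G: "simple_graph V E"
begin

lemma hc_weight_split:
  "hc_weight P = hc_weight (\<lambda>I. P I \<and> Q I) + hc_weight (\<lambda>I. P I \<and> \<not> Q I)"
proof -
  have "{I\<in>indep_sets V E. P I} =
      {I\<in>indep_sets V E. P I \<and> Q I} \<union> {I\<in>indep_sets V E. P I \<and> \<not> Q I}"
    by auto
  then show ?thesis
    unfolding hc_weight_def using finite_indep_sets[OF G]
    by (simp add: sum.union_disjoint[symmetric] disjoint_iff)
qed

lemma partition_fn_pos:
  assumes "lam \<ge> 0"
  shows "partition_fn V E lam > 0"
proof -
  have "{} \<in> indep_sets V E" unfolding indep_sets_def independent_def by auto
  then have "lam ^ card ({} :: 'a set) \<le> partition_fn V E lam"
    unfolding partition_fn_def using assms finite_indep_sets[OF G]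
    by (intro member_le_sum[of "{}" _ "\<lambda>J. lam ^ card J"]) auto
  then show ?thesis by simp
qed

lemma hc_weight_occupied:
  assumes "v \<in> V"
  shows "hc_weight (\<lambda>I. v \<in> I) = lam * hc_weight (\<lambda>I. v \<notin> I \<and> nbrs V E v \<inter> I = {})"
proof -
  let ?C = "{I\<in>indep_sets V E. v \<notin> I \<and> nbrs V E v \<inter> I = {}}"
  have inj: "inj_on (insert v) ?C"
    by (rule inj_onI) (metis (no_types, lifting) mem_Collect_eq insert_ident)
  have image: "insert v ` ?C = {I\<in>indep_sets V E. v \<in> I}"
  proof (intro equalityI subsetI)
    fix J assume "J \<in> {I\<in>indep_sets V E. v \<in> I}"
    then have "J - {v} \<in> ?C" and "J = insert v (J - {v})"
      using independent_insert_iff[OF G, of v "J - {v}"]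
      unfolding indep_sets_def by (auto simp: insert_absorb)
    then show "J \<in> insert v ` ?C" by blast
  qed (use assms independent_insert_iff[OF G] in \<open>auto simp: indep_sets_def\<close>)
  have "hc_weight (\<lambda>I. v \<in> I) = (\<Sum>I\<in>?C. lam ^ card (insert v I))"
    unfolding hc_weight_def image[symmetric] sum.reindex[OF inj] by simp
  also have "\<dots> = (\<Sum>I\<in>?C. lam * lam ^ card I)"
    using finite_indep[OF G] by (intro sum.cong) auto
  finally show ?thesis unfolding hc_weight_def by (simp add: sum_distrib_left)
qed

lemma hc_weight_occupied_uncovered:
  assumes "v \<in> V" and "1 + lam \<noteq> 0"
  shows "hc_weight (\<lambda>I. v \<in> I) =
           lam / (1 + lam) * hc_weight (\<lambda>I. nbrs V E v \<inter> I = {})"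
proof -
  have "hc_weight (\<lambda>I. nbrs V E v \<inter> I = {} \<and> v \<in> I) = hc_weight (\<lambda>I. v \<in> I)"
    by (intro hc_weight_cong) (auto simp: indep_sets_def independent_def nbrs_def)
  moreover have "hc_weight (\<lambda>I. nbrs V E v \<inter> I = {} \<and> v \<notin> I) =
      hc_weight (\<lambda>I. v \<notin> I \<and> nbrs V E v \<inter> I = {})"
    by (intro hc_weight_cong) auto
  ultimately have "hc_weight (\<lambda>I. nbrs V E v \<inter> I = {}) =
      hc_weight (\<lambda>I. v \<in> I) + hc_weight (\<lambda>I. v \<notin> I \<and> nbrs V E v \<inter> I = {})"
    using hc_weight_split[of "\<lambda>I. nbrs V E v \<inter> I = {}" "\<lambda>I. v \<in> I"] by simp
  then show ?thesis
    using hc_weight_occupied[OF assms(1)] assms(2) by (simp add: field_simps)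
qed

lemma alpha_bar_eq:
  "alpha_bar V E lam = (\<Sum>v\<in>V. hc_weight (\<lambda>I. v \<in> I)) / partition_fn V E lam"
proof -
  have "alpha_bar V E lam =
      (\<Sum>I\<in>indep_sets V E. lam ^ card I * real (card I)) / partition_fn V E lam"
    unfolding alpha_bar_def hc_prob_def by (simp add: sum_divide_distrib)
  also have "(\<Sum>I\<in>indep_sets V E. lam ^ card I * real (card I)) =
      (\<Sum>I\<in>indep_sets V E. \<Sum>v\<in>V. if v \<in> I then lam ^ card I else 0)"
  proof (rule sum.cong[OF refl])
    fix I assume "I \<in> indep_sets V E"
    then have "V \<inter> I = I" unfolding indep_sets_def independent_def by auto
    then show "lam ^ card I * real (card I) = (\<Sum>v\<in>V. if v \<in> I then lam ^ card I else 0)"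
      using finite_vertices[OF G] by (simp add: sum.If_cases)
  qed
  also have "\<dots> = (\<Sum>v\<in>V. hc_weight (\<lambda>I. v \<in> I))"
    unfolding hc_weight_def using finite_indep_sets[OF G]
    by (subst sum.swap) (simp add: sum.inter_filter)
  finally show ?thesis .
qed

lemma indep_sets_fibre:
  assumes "triangle_free V E" and J: "J \<in> indep_sets V E" "nbrs V E v \<inter> J = {}"
  shows "{I \<in> indep_sets V E. I - nbrs V E v = J} =
           (\<lambda>S. J \<union> S) ` Pow (uncovered V E J v)"
proof (intro equalityI subsetI)
  fix I assume I: "I \<in> {I \<in> indep_sets V E. I - nbrs V E v = J}"
  then have "I \<inter> nbrs V E v \<subseteq> uncovered V E J v"
    unfolding uncovered_def indep_sets_def independent_def nbrs_def by auto
  moreover have "I = J \<union> (I \<inter> nbrs V E v)" using I by auto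
  ultimately show "I \<in> (\<lambda>S. J \<union> S) ` Pow (uncovered V E J v)" by blast
next
  fix I assume "I \<in> (\<lambda>S. J \<union> S) ` Pow (uncovered V E J v)"
  then obtain S where S: "S \<subseteq> uncovered V E J v" and I: "I = J \<union> S" by auto
  have "independent V E S"
    using nbrs_independent[OF G assms(1), of v] S uncovered_subset_nbrs[of V E J v]
    unfolding independent_def by blast
  moreover have "\<not> E x y" if "x \<in> J" "y \<in> S" for x y
    using that S edge_sym[OF G] edge_vertices[OF G] unfolding uncovered_def nbrs_def by blast
  ultimately have "independent V E I"
    using J(1) independent_Un_iff[OF G] unfolding I indep_sets_def by blast
  moreover have "I - nbrs V E v = J" using S J(2) uncovered_subset_nbrs[of V E J v] I by auto
  ultimately show "I \<in> {I \<in> indep_sets V E. I - nbrs V E v = J}"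
    unfolding indep_sets_def by auto
qed

lemma sum_indep_sets_fibre:
  assumes "triangle_free V E" and "1 + lam \<noteq> 0"
    and J: "J \<in> indep_sets V E" "nbrs V E v \<inter> J = {}"
  shows "(\<Sum>I\<in>{I \<in> indep_sets V E. I - nbrs V E v = J}.
            lam ^ card I / (1 + lam) ^ card (uncovered V E I v)) = lam ^ card J"
proof -
  let ?U = "uncovered V E J v"
  have fin_U: "finite ?U"
    using finite_vertices[OF G] uncovered_subset_nbrs[of V E J v]
    by (auto intro: finite_subset simp: nbrs_def)
  have disj: "J \<inter> S = {}" if "S \<subseteq> ?U" for S
    using that J(2) uncovered_subset_nbrs[of V E J v] by auto
  have "inj_on (\<lambda>S. J \<union> S) (Pow ?U)"
    by (rule inj_onI) (use disj in blast)
  then have "(\<Sum>I\<in>{I \<in> indep_sets V E. I - nbrs V E v = J}.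
        lam ^ card I / (1 + lam) ^ card (uncovered V E I v)) =
      (\<Sum>S\<in>Pow ?U. lam ^ card (J \<union> S) / (1 + lam) ^ card (uncovered V E (J \<union> S) v))"
    unfolding indep_sets_fibre[OF assms(1) J] by (simp add: sum.reindex)
  also have "\<dots> = (\<Sum>S\<in>Pow ?U. lam ^ card J * lam ^ card S / (1 + lam) ^ card ?U)"
  proof (rule sum.cong[OF refl])
    fix S assume S: "S \<in> Pow ?U"
    then have "J \<union> S - nbrs V E v = J"
      using J(2) uncovered_subset_nbrs[of V E J v] by auto
    then have "uncovered V E (J \<union> S) v = ?U"
      using uncovered_Diff_nbrs[OF G assms(1), of "J \<union> S" v] by simp
    moreover have "card (J \<union> S) = card J + card S"
      using S disj finite_indep[OF G J(1)] fin_U by (auto intro: card_Un_disjoint finite_subset)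
    ultimately show "lam ^ card (J \<union> S) / (1 + lam) ^ card (uncovered V E (J \<union> S) v) =
        lam ^ card J * lam ^ card S / (1 + lam) ^ card ?U"
      by (simp add: power_add)
  qed
  also have "\<dots> = lam ^ card J * (\<Sum>S\<in>Pow ?U. lam ^ card S) / (1 + lam) ^ card ?U"
    by (simp add: sum_divide_distrib sum_distrib_left)
  also have "\<dots> = lam ^ card J"
    using sum_Pow_power_card[OF fin_U, of lam] assms(2) by (simp add: add.commute)
  finally show ?thesis .
qed

lemma sum_indep_sets_inverse_power_uncovered:
  assumes "triangle_free V E" and "1 + lam \<noteq> 0"
  shows "(\<Sum>I\<in>indep_sets V E. lam ^ card I / (1 + lam) ^ uncovered_nbrs V E I v) =
           hc_weight (\<lambda>I. nbrs V E v \<inter> I = {})"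
proof -
  let ?JJ = "{J \<in> indep_sets V E. nbrs V E v \<inter> J = {}}"
  have "(\<lambda>I. I - nbrs V E v) ` indep_sets V E \<subseteq> ?JJ"
    unfolding indep_sets_def independent_def by auto
  then have "(\<Sum>I\<in>indep_sets V E. lam ^ card I / (1 + lam) ^ card (uncovered V E I v)) =
      (\<Sum>J\<in>?JJ. \<Sum>I\<in>{I \<in> indep_sets V E. I - nbrs V E v = J}.
         lam ^ card I / (1 + lam) ^ card (uncovered V E I v))"
    using finite_indep_sets[OF G] by (intro sum.group[symmetric]) auto
  also have "\<dots> = (\<Sum>J\<in>?JJ. lam ^ card J)"
    using sum_indep_sets_fibre[OF assms] by (intro sum.cong) auto
  finally show ?thesis
    unfolding hc_weight_def uncovered_nbrs_def uncovered_def[symmetric] .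
qed

lemma joint_expect_uncovered_nbrs:
  "joint_expect V E lam (\<lambda>I v. real (uncovered_nbrs V E I v)) =
     (\<Sum>u\<in>V. real (degree V E u) * hc_weight (\<lambda>I. nbrs V E u \<inter> I = {}))
       / (partition_fn V E lam * real (card V))"
proof -
  have "(\<Sum>v\<in>V. \<Sum>I\<in>indep_sets V E. lam ^ card I * real (uncovered_nbrs V E I v)) =
      (\<Sum>I\<in>indep_sets V E. lam ^ card I * real (\<Sum>v\<in>V. uncovered_nbrs V E I v))"
    by (subst sum.swap) (simp add: sum_distrib_left)
  also have "\<dots> = (\<Sum>I\<in>indep_sets V E. \<Sum>u\<in>V.
      real (degree V E u) * (if nbrs V E u \<inter> I = {} then lam ^ card I else 0))"
    unfolding uncovered_nbrs_def sum_card_nbrs_filter[OF G]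
    by (auto simp: sum_distrib_left of_nat_sum intro!: sum.cong)
  also have "\<dots> = (\<Sum>u\<in>V. real (degree V E u) * hc_weight (\<lambda>I. nbrs V E u \<inter> I = {}))"
    unfolding hc_weight_def using finite_indep_sets[OF G]
    by (subst sum.swap) (simp add: sum_distrib_left sum.inter_filter)
  finally show ?thesis by (simp add: joint_expect_eq)
qed

end

end

theorem mainTheorem7:
  fixes V :: "'a set" and E :: "'a \<Rightarrow> 'a \<Rightarrow> bool" and lam :: real
  assumes "simple_graph V E" and "triangle_free V E" and "card V \<ge> 1" and "lam > 0"
  shows "alpha_bar V E lam / real (card V) =
           lam / (1 + lam) *
           joint_expect V E lam (\<lambda>I v. 1 / (1 + lam) ^ uncovered_nbrs V E I v)
         \<and> (\<forall>d. max_degree V E = d \<and> d \<ge> 1 \<longrightarrow>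
           alpha_bar V E lam / real (card V) \<ge>
           lam / (1 + lam) *
           (joint_expect V E lam (\<lambda>I v. real (uncovered_nbrs V E I v)) / real d))
         \<and> (\<forall>d. regular V E d \<and> d \<ge> 1 \<longrightarrow>
           alpha_bar V E lam / real (card V) =
           lam / (1 + lam) *
           (joint_expect V E lam (\<lambda>I v. real (uncovered_nbrs V E I v)) / real d))"
proof -
  note G = assms(1)
  define W where "W u = hc_weight V E lam (\<lambda>I. nbrs V E u \<inter> I = {})" for u
  define S where "S = (\<Sum>u\<in>V. W u)"
  define D where "D = (\<Sum>u\<in>V. real (degree V E u) * W u)"
  define denom where "denom = partition_fn V E lam * real (card V)"
  have lam: "1 + lam \<noteq> 0" "lam / (1 + lam) \<ge> 0" using assms(4) by auto
  have "denom > 0" using partition_fn_pos[OF G] assms(3,4) by (simp add: denom_def)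
  have alpha: "alpha_bar V E lam / real (card V) = lam / (1 + lam) * (S / denom)"
    using hc_weight_occupied_uncovered[OF G _ lam(1)]
    by (simp add: alpha_bar_eq[OF G] W_def S_def denom_def sum_distrib_left)
  have expect_inverse_power:
    "joint_expect V E lam (\<lambda>I v. 1 / (1 + lam) ^ uncovered_nbrs V E I v) = S / denom"
    using sum_indep_sets_inverse_power_uncovered[OF G assms(2) lam(1)]
    by (simp add: joint_expect_eq W_def S_def denom_def)
  have expect_Z: "joint_expect V E lam (\<lambda>I v. real (uncovered_nbrs V E I v)) / real d =
      D / real d / denom" for d
    by (simp add: joint_expect_uncovered_nbrs[OF G] W_def D_def denom_def)
  have "lam / (1 + lam) * (D / real d / denom) \<le> lam / (1 + lam) * (S / denom)"
    if "max_degree V E = d" "d \<ge> 1" for d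
    using sum_degree_mult_le[OF G, of W] hc_weight_nonneg[of lam] assms(4) that \<open>denom > 0\<close>
    by (intro mult_left_mono[OF _ lam(2)] divide_right_mono)
      (auto simp: W_def D_def S_def pos_divide_le_eq mult.commute)
  moreover have "D / real d = S" if "regular V E d" "d \<ge> 1" for d
    using that by (simp add: regular_def D_def S_def sum_distrib_left[symmetric])
  ultimately show ?thesis
    unfolding alpha expect_inverse_power expect_Z by auto
qed

end
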